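(* Let $G>0$, $\bar\rho>0$, and let $W$ and $g$ be as in the context. Let $T>0$, $\mu\in\mathbb{R}$, and let $q:[0,T)\to[0,\infty)$ and $\varphi:[0,1]\to[0,\infty)$ be twice differentiable, with $\varphi(0)=\varphi''(0)=0$ and $\varphi'>0$ on $[0,1]$. Define \[ \lambda(R)=\begin{cases}\varphi(R)/R, & R\in(0,1],\\ \varphi'(0), & R=0,\end{cases}\qquad y(R)=\frac{\varphi'(R)}{\lambda(R)},\quad R\in[0,1]. \] Assume that \[ \begin{cases} \displaystyle \frac{\varphi^2}{R^5}\,\partial_R\Big(\frac{R^4}{\varphi}\,g'(y)\Big) + \frac{\varphi}{R^2}\,g(y) = \Big(\frac{4\pi}{3}G\bar\rho + \mu\,\lambda^3\Big)\bar\rho^{-\frac13}\,\varphi,\\[2mm] g'(y(1))=0,\qquad \varphi(1)=1, \end{cases} \] and that $q^2\ddot q=\mu$ on $[0,T)$ with $q(0)=1$. Then $\phi(t,R)=q(t)\varphi(R)$ satisfies \[ \begin{cases} \displaystyle \phi_{tt} - \bar\rho^{\frac13}\Big[\frac{1}{R^2\phi}\,\partial_R\Big(\frac{R^4}{\phi}\,g'(Y)\Big) + \frac{R}{\phi^2}\,g(Y)\Big] + \frac{4\pi}{3}R^3 G\bar\rho\,\phi^{-2}=0,\\[2mm] g'(Y(t,1))=0, \end{cases} \] where $\Lambda(t,R)=\phi(t,R)/R$ for $R\in(0,1]$, $\Lambda(t,0)=\phi_R(t,0)$, and $Y(t,R)=\phi_R(t,R)/\Lambda(t,R)$.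
   Context: The strain-energy function $W:GL_+(3,\mathbb{R})\to\mathbb{R}$ is continuously differentiable, objective ($W(OF)=W(F)$) and isotropic ($W(FO)=W(F)$) for all $O\in SO(3,\mathbb{R})$, homogeneous of degree $-1$ ($W(\sigma F)=\sigma^{-1}W(F)$ for $\sigma>0$), and normalized by $W(I)=\bar\rho^{1/3}$. For $y>0$ and unit vector $\omega\in\mathbb{S}^2$, $g(y)=\bar\rho^{-1/3}W(I+(y-1)\,\omega\otimes\omega)$, which is independent of $\omega$. The second displayed system is the Lagrangian equation for spherically symmetric flow maps $x(t,X)=\phi(t,|X|)X/|X|$ of a self-gravitating hyperelastic body occupying the unit ball in reference configuration with traction-free boundary. *)

theory Defs
  imports "HOL-Analysis.Analysis"
begin

definition GLplus3 :: "(real^3^3) set" where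
  "GLplus3 = {F. det F > 0}"

definition SO3 :: "(real^3^3) set" where
  "SO3 = {Q. orthogonal_matrix Q \<and> det Q = 1}"

definition outer :: "real^3 \<Rightarrow> real^3 \<Rightarrow> real^3^3" where
  "outer a b = (\<chi> i j. a $ i * b $ j)"

definition C1_on_GLplus :: "(real^3^3 \<Rightarrow> real) \<Rightarrow> bool" where
  "C1_on_GLplus W \<longleftrightarrow> (\<exists>W'. (\<forall>F\<in>GLplus3. (W has_derivative blinfun_apply (W' F)) (at F))
        \<and> continuous_on GLplus3 W')"

definition Lam_of :: "(real \<Rightarrow> real) \<Rightarrow> real \<Rightarrow> real" where
  "Lam_of f R = (if R = 0 then vector_derivative f (at 0 within {0..1}) else f R / R)"

definition Y_of :: "(real \<Rightarrow> real) \<Rightarrow> real \<Rightarrow> real" where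
  "Y_of f R = vector_derivative f (at R within {0..1}) / Lam_of f R"

end

theory Submission
  imports Defs
begin

(*
  Y is invariant under the scaling phi |-> q(t) phi, so for Phi = q phi the radial flux is the
  flux of the profile divided by q(t), and the elastic bracket becomes q(t)^(-2) times the left
  side of the profile equation. Its term mu lambda^3 is then cancelled exactly by
  Phi_tt = q'' phi = mu phi / q^2.

  The analytic point is q > 0 on [0,T). At a first zero t1 > 0 we would have mu = q^2 q'' = 0,
  hence q'' = 0 on (0,t1), while q'(t1) = 0 because t1 is an interior minimum of q >= 0; so q is
  constant on [0,t1], contradicting q(0) = 1.
*)

lemma first_zero:
  fixes f :: "real \<Rightarrow> real"
  assumes cont: "continuous_on {a..b} f" and "a \<le> b" "f a \<noteq> 0" "f b = 0"
  obtains c where "a < c" "c \<le> b" "f c = 0" "\<And>x. a \<le> x \<Longrightarrow> x < c \<Longrightarrow> f x \<noteq> 0"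
proof -
  define Z where "Z = {a..b} \<inter> f -` {0}"
  have "closed Z"
    unfolding Z_def by (rule continuous_closed_preimage[OF cont]) auto
  moreover have "b \<in> Z" and bdd: "bdd_below Z"
    using assms unfolding Z_def by (auto intro: bdd_belowI[of _ a])
  ultimately have "Inf Z \<in> Z"
    using closed_contains_Inf by blast
  moreover have "f x \<noteq> 0" if "a \<le> x" "x < Inf Z" for x
    using that cInf_lower[OF _ bdd, of x] \<open>Inf Z \<in> Z\<close> unfolding Z_def by force
  ultimately show thesis
    using that[of "Inf Z"] \<open>f a \<noteq> 0\<close> unfolding Z_def by (force simp: order_le_less)
qed

lemma const_end_if_second_deriv_zero:
  fixes f f' :: "real \<Rightarrow> real"
  assumes "a < b" and cont_f: "continuous_on {a..b} f" and cont_f': "continuous_on {a..b} f'"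
    and f': "\<And>x. a < x \<Longrightarrow> x < b \<Longrightarrow> (f has_real_derivative f' x) (at x)"
    and f'': "\<And>x. a < x \<Longrightarrow> x < b \<Longrightarrow> (f' has_real_derivative 0) (at x)"
    and "f' b = 0"
  shows "f b = f a"
proof (rule DERIV_isconst_end[OF \<open>a < b\<close> cont_f])
  fix x assume x: "a < x" "x < b"
  have "continuous_on {x..b} f'"
    using continuous_on_subset[OF cont_f'] x by simp
  then have "f' b = f' x"
    using DERIV_isconst_end[OF \<open>x < b\<close>] f'' x by simp
  then show "(f has_real_derivative 0) (at x)"
    using f'[OF x] \<open>f' b = 0\<close> by simp
qed

lemma nonneg_solution_sq_mult_second_deriv_const_pos:
  fixes q q' q'' :: "real \<Rightarrow> real" and T mu :: real
  assumes nonneg: "\<And>t. t \<in> {0..<T} \<Longrightarrow> q t \<ge> 0"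
    and q': "\<And>t. t \<in> {0..<T} \<Longrightarrow> (q has_real_derivative q' t) (at t within {0..<T})"
    and q'': "\<And>t. t \<in> {0..<T} \<Longrightarrow> (q' has_real_derivative q'' t) (at t within {0..<T})"
    and ode: "\<And>t. t \<in> {0..<T} \<Longrightarrow> (q t)^2 * q'' t = mu"
    and q0: "q 0 > 0"
    and t0: "t0 \<in> {0..<T}"
  shows "q t0 > 0"
proof (rule ccontr)
  assume "\<not> q t0 > 0"
  then have "q t0 = 0"
    using nonneg[OF t0] by simp
  then have "mu = 0"
    using ode[OF t0] by simp
  have cont: "continuous_on {a..b} q" "continuous_on {a..b} q'" if "0 \<le> a" "b < T" for a b
    using continuous_on_subset[OF DERIV_continuous_on[OF q']]
      continuous_on_subset[OF DERIV_continuous_on[OF q'']] that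
    by (simp_all add: subset_iff)
  obtain t1 where t1: "0 < t1" "t1 \<le> t0" "q t1 = 0"
    and before_t1: "\<And>x. 0 \<le> x \<Longrightarrow> x < t1 \<Longrightarrow> q x \<noteq> 0"
    by (rule first_zero[OF cont(1)[of 0 t0]]) (use t0 q0 \<open>q t0 = 0\<close> in auto)
  have "t1 < T"
    using t1 t0 by simp
  have deriv_at: "(q has_real_derivative q' x) (at x)" "(q' has_real_derivative q'' x) (at x)"
    if "0 < x" "x < T" for x
  proof -
    have "at x within {0..<T} = at x"
      by (rule at_within_interior) (use that in simp)
    then show "(q has_real_derivative q' x) (at x)" "(q' has_real_derivative q'' x) (at x)"
      using q'[of x] q''[of x] that by simp_all
  qed
  have "q' t1 = 0"
  proof (rule DERIV_local_min[OF deriv_at(1)[OF \<open>0 < t1\<close> \<open>t1 < T\<close>]])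
    show "0 < min t1 (T - t1)"
      using t1 \<open>t1 < T\<close> by simp
    show "\<forall>y. \<bar>t1 - y\<bar> < min t1 (T - t1) \<longrightarrow> q t1 \<le> q y"
      using nonneg t1(3) by (auto simp: abs_less_iff)
  qed
  moreover have "(q' has_real_derivative 0) (at x)" if "0 < x" "x < t1" for x
    using deriv_at(2)[of x] ode[of x] before_t1[of x] \<open>mu = 0\<close> that \<open>t1 < T\<close> by simp
  ultimately have "q t1 = q 0"
    using const_end_if_second_deriv_zero[OF \<open>0 < t1\<close> cont[of 0 t1]] deriv_at(1) \<open>t1 < T\<close> by simp
  with t1 q0 show False by simp
qed

lemma less_if_has_real_derivative_pos:
  fixes f f' :: "real \<Rightarrow> real"
  assumes deriv: "\<And>x. x \<in> {a..b} \<Longrightarrow> (f has_real_derivative f' x) (at x within {a..b})"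
    and pos: "\<And>x. x \<in> {a<..<b} \<Longrightarrow> f' x > 0"
    and "a < c" "c \<le> b"
  shows "f a < f c"
proof (rule DERIV_pos_imp_increasing_open[OF \<open>a < c\<close>])
  fix x assume "a < x" "x < c"
  then have "at x within {a..b} = at x"
    using \<open>c \<le> b\<close> by (intro at_within_interior) simp
  then show "\<exists>y. (f has_real_derivative y) (at x) \<and> y > 0"
    using deriv[of x] pos[of x] \<open>a < x\<close> \<open>x < c\<close> \<open>c \<le> b\<close> by auto
next
  show "continuous_on {a..c} f"
    using continuous_on_subset[OF DERIV_continuous_on[OF deriv]] \<open>c \<le> b\<close> by simp
qed

lemma vector_derivative_within_closed_interval_real:
  fixes f :: "real \<Rightarrow> real"
  assumes "a < b" "x \<in> {a..b}" "(f has_real_derivative D) (at x within {a..b})"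
  shows "vector_derivative f (at x within {a..b}) = D"
  using vector_derivative_within_closed_interval assms
  by (simp add: has_real_derivative_iff_has_vector_derivative)

lemma Lam_of_eq:
  assumes "(f has_real_derivative f0) (at 0 within {0..1})"
  shows "Lam_of f R = (if R = 0 then f0 else f R / R)"
  using vector_derivative_within_closed_interval_real[OF zero_less_one _ assms] by (simp add: Lam_of_def)

lemma Y_of_eq:
  assumes "R \<in> {0..1}"
    and "(f has_real_derivative f' R) (at R within {0..1})"
    and "(f has_real_derivative f' 0) (at 0 within {0..1})"
  shows "Y_of f R = f' R / (if R = 0 then f' 0 else f R / R)"
  using vector_derivative_within_closed_interval_real[OF zero_less_one assms(1,2)] Lam_of_eq[OF assms(3)]
  by (simp add: Y_of_def)

lemma Y_of_cmult:
  assumes "c \<noteq> 0" and "R \<in> {0..1}"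
    and deriv: "\<And>r. r \<in> {0..1} \<Longrightarrow> (f has_real_derivative f' r) (at r within {0..1})"
  shows "Y_of (\<lambda>r. c * f r) R = Y_of f R"
proof -
  have "((\<lambda>r. c * f r) has_real_derivative c * f' r) (at r within {0..1})" if "r \<in> {0..1}" for r
    using deriv[OF that] by (rule DERIV_cmult)
  then have "Y_of (\<lambda>r. c * f r) R = c * f' R / (if R = 0 then c * f' 0 else c * f R / R)"
    using Y_of_eq[of R "\<lambda>r. c * f r" "\<lambda>r. c * f' r"] \<open>R \<in> {0..1}\<close> by simp
  also have "\<dots> = Y_of f R"
    using Y_of_eq[of R f f'] deriv \<open>R \<in> {0..1}\<close> \<open>c \<noteq> 0\<close> by simp
  finally show ?thesis .
qed

lemma separated_ansatz_identity:
  fixes Q Q'' a R D gy k mu p :: real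
  assumes "Q > 0" "a > 0" "R > 0" "p > 0"
    and profile: "a^2 / R^5 * D + a / R^2 * gy = (k + mu * (a / R)^3) * p powr (-1/3) * a"
    and "Q^2 * Q'' = mu"
  shows "Q'' * a - p powr (1/3) * (1 / (R^2 * (Q * a)) * (D / Q) + R / (Q * a)^2 * gy)
           + k * R^3 * (Q * a) powr (-2) = 0"
proof -
  have cancel: "p powr (1/3) * p powr (-1/3) = 1"
    using \<open>p > 0\<close> by (simp add: powr_add[symmetric])
  have "p powr (1/3) * (1 / (R^2 * (Q * a)) * (D / Q) + R / (Q * a)^2 * gy)
        = p powr (1/3) * (a^2 / R^5 * D + a / R^2 * gy) * R^3 / (Q^2 * a^3)"
    using assms(1-3) by (simp add: field_simps power_mult_distrib eval_nat_numeral)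
  also have "\<dots> = (k + mu * (a / R)^3) * R^3 / (Q^2 * a^2)"
    unfolding profile using assms(1-3) cancel by (simp add: field_simps eval_nat_numeral)
  also have "\<dots> = k * R^3 / (Q * a)^2 + mu * a / Q^2"
    using assms(1-3) by (simp add: field_simps power_mult_distrib eval_nat_numeral)
  finally show ?thesis
    using assms(1,2,6) by (simp add: powr_minus powr_numeral field_simps)
qed

lemma separated_solution_radial_equation:
  fixes q q' q'' \<phi> \<phi>' g :: "real \<Rightarrow> real" and T t R G rhob mu :: real
  assumes q_d1: "\<And>s. s \<in> {0..<T} \<Longrightarrow> (q has_real_derivative q' s) (at s within {0..<T})"
    and q_d2: "(q' has_real_derivative q'' t) (at t within {0..<T})"
    and q_pos: "q t > 0" and q_ode: "(q t)^2 * q'' t = mu"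
    and \<phi>_pos: "\<phi> R > 0" and R: "R \<in> {0<..1}" and rhob_pos: "rhob > 0"
    and Y_eq: "\<And>r. r \<in> {0..1} \<Longrightarrow>
                 Y_of (\<lambda>r. q t * \<phi> r) r = \<phi>' r / (if r = 0 then \<phi>' 0 else \<phi> r / r)"
    and ode: "\<exists>D. ((\<lambda>r. r^4 / \<phi> r * deriv g (\<phi>' r / (if r = 0 then \<phi>' 0 else \<phi> r / r)))
                  has_real_derivative D) (at R within {0..1})
             \<and> (\<phi> R)^2 / R^5 * D
                 + \<phi> R / R^2 * g (\<phi>' R / (if R = 0 then \<phi>' 0 else \<phi> R / R))
               = (4 * pi / 3 * G * rhob + mu * (if R = 0 then \<phi>' 0 else \<phi> R / R)^3)
                 * rhob powr (-1/3) * \<phi> R"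
  shows "\<exists>\<Phi>t \<Phi>tt D.
           (\<forall>s\<in>{0..<T}. ((\<lambda>s. q s * \<phi> R) has_real_derivative \<Phi>t s) (at s within {0..<T}))
         \<and> (\<Phi>t has_real_derivative \<Phi>tt) (at t within {0..<T})
         \<and> ((\<lambda>r. r^4 / (q t * \<phi> r) * deriv g (Y_of (\<lambda>r. q t * \<phi> r) r))
              has_real_derivative D) (at R within {0..1})
         \<and> \<Phi>tt - rhob powr (1/3) * (1 / (R^2 * (q t * \<phi> R)) * D
                + R / (q t * \<phi> R)^2 * g (Y_of (\<lambda>r. q t * \<phi> r) R))
             + 4 * pi / 3 * R^3 * G * rhob * (q t * \<phi> R) powr (-2) = 0"
proof -
  define y where "y r = \<phi>' r / (if r = 0 then \<phi>' 0 else \<phi> r / r)" for r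
  obtain D where flux: "((\<lambda>r. r^4 / \<phi> r * deriv g (y r)) has_real_derivative D) (at R within {0..1})"
    and profile: "(\<phi> R)^2 / R^5 * D + \<phi> R / R^2 * g (y R)
                  = (4 * pi / 3 * G * rhob + mu * (\<phi> R / R)^3) * rhob powr (-1/3) * \<phi> R"
    using ode R unfolding y_def by auto
  have "((\<lambda>r. r^4 / (q t * \<phi> r) * deriv g (Y_of (\<lambda>r. q t * \<phi> r) r))
          has_real_derivative D / q t) (at R within {0..1})"
  proof (rule has_field_derivative_transform_within[OF DERIV_cdivide[OF flux] zero_less_one])
    show "R \<in> {0..1}"
      using R by simp
    show "r^4 / \<phi> r * deriv g (y r) / q t = r^4 / (q t * \<phi> r) * deriv g (Y_of (\<lambda>r. q t * \<phi> r) r)"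
      if "r \<in> {0..1}" for r
      using Y_eq[OF that] unfolding y_def by simp
  qed
  moreover have "q'' t * \<phi> R - rhob powr (1/3) * (1 / (R^2 * (q t * \<phi> R)) * (D / q t)
                   + R / (q t * \<phi> R)^2 * g (Y_of (\<lambda>r. q t * \<phi> r) R))
                 + 4 * pi / 3 * R^3 * G * rhob * (q t * \<phi> R) powr (-2) = 0"
    using separated_ansatz_identity[OF q_pos \<phi>_pos _ rhob_pos profile q_ode] Y_eq[of R] R
    unfolding y_def by (simp add: mult_ac)
  moreover have "\<forall>s\<in>{0..<T}. ((\<lambda>s. q s * \<phi> R) has_real_derivative q' s * \<phi> R) (at s within {0..<T})"
    using q_d1 by (auto intro!: derivative_eq_intros)
  moreover have "((\<lambda>s. q' s * \<phi> R) has_real_derivative q'' t * \<phi> R) (at t within {0..<T})"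
    using q_d2 by (auto intro!: derivative_eq_intros)
  ultimately show ?thesis
    by (intro exI conjI)
qed

theorem corollary1:
  fixes G rhob T mu :: real
    and W :: "real^3^3 \<Rightarrow> real"
    and g :: "real \<Rightarrow> real"
    and q q' q'' :: "real \<Rightarrow> real"
    and \<phi> \<phi>' \<phi>'' :: "real \<Rightarrow> real"
  assumes G_pos: "G > 0" and rhob_pos: "rhob > 0"
    and W_C1: "C1_on_GLplus W"
    and W_obj: "\<And>Q F. Q \<in> SO3 \<Longrightarrow> F \<in> GLplus3 \<Longrightarrow> W (Q ** F) = W F"
    and W_iso: "\<And>Q F. Q \<in> SO3 \<Longrightarrow> F \<in> GLplus3 \<Longrightarrow> W (F ** Q) = W F"
    and W_hom: "\<And>\<sigma> F. \<sigma> > 0 \<Longrightarrow> F \<in> GLplus3 \<Longrightarrow> W (\<sigma> *\<^sub>R F) = W F / \<sigma>"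
    and W_norm: "W (mat 1) = rhob powr (1/3)"
    and g_def: "\<And>y \<omega>. y > 0 \<Longrightarrow> norm \<omega> = 1 \<Longrightarrow>
                   g y = rhob powr (-1/3) * W (mat 1 + (y - 1) *\<^sub>R outer \<omega> \<omega>)"
    and T_pos: "T > 0"
    and q_nonneg: "\<And>t. t \<in> {0..<T} \<Longrightarrow> q t \<ge> 0"
    and q_d1: "\<And>t. t \<in> {0..<T} \<Longrightarrow> (q has_real_derivative q' t) (at t within {0..<T})"
    and q_d2: "\<And>t. t \<in> {0..<T} \<Longrightarrow> (q' has_real_derivative q'' t) (at t within {0..<T})"
    and \<phi>_nonneg: "\<And>R. R \<in> {0..1} \<Longrightarrow> \<phi> R \<ge> 0"
    and \<phi>_d1: "\<And>R. R \<in> {0..1} \<Longrightarrow> (\<phi> has_real_derivative \<phi>' R) (at R within {0..1})"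
    and \<phi>_d2: "\<And>R. R \<in> {0..1} \<Longrightarrow> (\<phi>' has_real_derivative \<phi>'' R) (at R within {0..1})"
    and \<phi>_0: "\<phi> 0 = 0" and \<phi>''_0: "\<phi>'' 0 = 0"
    and \<phi>'_pos: "\<And>R. R \<in> {0..1} \<Longrightarrow> \<phi>' R > 0"
    and ode: "\<And>R. R \<in> {0<..1} \<Longrightarrow>
       (\<exists>D. ((\<lambda>r. r^4 / \<phi> r * deriv g (\<phi>' r / (if r = 0 then \<phi>' 0 else \<phi> r / r)))
                has_real_derivative D) (at R within {0..1})
           \<and> (\<phi> R)^2 / R^5 * D
               + \<phi> R / R^2 * g (\<phi>' R / (if R = 0 then \<phi>' 0 else \<phi> R / R))
             = (4 * pi / 3 * G * rhob + mu * (if R = 0 then \<phi>' 0 else \<phi> R / R)^3)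
               * rhob powr (-1/3) * \<phi> R)"
    and bc: "deriv g (\<phi>' 1 / (\<phi> 1 / 1)) = 0"
    and \<phi>_1: "\<phi> 1 = 1"
    and q_ode: "\<And>t. t \<in> {0..<T} \<Longrightarrow> (q t)^2 * q'' t = mu"
    and q_0: "q 0 = 1"
  defines "\<Phi> \<equiv> \<lambda>t R. q t * \<phi> R"
  shows "\<forall>t\<in>{0..<T}.
           (\<forall>R\<in>{0<..1}.
              \<exists>\<Phi>t \<Phi>tt D.
                (\<forall>s\<in>{0..<T}. ((\<lambda>s. \<Phi> s R) has_real_derivative \<Phi>t s) (at s within {0..<T}))
              \<and> (\<Phi>t has_real_derivative \<Phi>tt) (at t within {0..<T})
              \<and> ((\<lambda>r. r^4 / \<Phi> t r * deriv g (Y_of (\<Phi> t) r)) has_real_derivative D) (at R within {0..1})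
              \<and> \<Phi>tt - rhob powr (1/3) * (1 / (R^2 * \<Phi> t R) * D + R / (\<Phi> t R)^2 * g (Y_of (\<Phi> t) R))
                  + 4 * pi / 3 * R^3 * G * rhob * (\<Phi> t R) powr (-2) = 0)
         \<and> deriv g (Y_of (\<Phi> t) 1) = 0"
proof -
  have q_pos: "q t > 0" if "t \<in> {0..<T}" for t
    using nonneg_solution_sq_mult_second_deriv_const_pos[OF q_nonneg q_d1 q_d2 q_ode _ that] q_0
    by simp
  have \<phi>_pos: "\<phi> R > 0" if "R \<in> {0<..1}" for R
    using less_if_has_real_derivative_pos[OF \<phi>_d1 \<phi>'_pos, of R] that \<phi>_0 by simp
  have Y_eq: "Y_of (\<lambda>r. q t * \<phi> r) r = \<phi>' r / (if r = 0 then \<phi>' 0 else \<phi> r / r)"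
    if "r \<in> {0..1}" "t \<in> {0..<T}" for t r
    using Y_of_cmult[OF _ that(1) \<phi>_d1] Y_of_eq[OF that(1) \<phi>_d1 \<phi>_d1] q_pos[OF that(2)] that(1)
    by simp
  show ?thesis
    unfolding \<Phi>_def
    using bc \<phi>_1
    by (intro ballI conjI ode
          separated_solution_radial_equation[where q' = q' and q'' = q'' and \<phi>' = \<phi>' and mu = mu])
      (simp_all add: q_d1 q_d2 q_pos q_ode \<phi>_pos rhob_pos Y_eq)
qed

end
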